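(* Let $G=(V,E)$ be a connected graph, $\tau$ a set of types, $f:\tau\to\mathbb{Q}_{\ge1}$ a fitness function, and $\alpha\in\tau$. Let $\beta=\arg\min\{f(j):j\in\tau\setminus\{\alpha\}\}$ and $\tau'=\{\alpha,\beta\}$. Let $\Omega$ (resp. $\Omega'$) be the set of functions $V\to\tau$ (resp. $V\to\tau'$) and define $g:\Omega\to\Omega'$ by $g(S)(v)=\alpha$ if $S(v)=\alpha$ and $g(S)(v)=\beta$ otherwise. Then for every $M_0\in\Omega$, $\pi_\alpha(G,\tau,f,M_0)\le\pi_\alpha(G,\tau',f,g(M_0))$ (where on the right $f$ is restricted to $\tau'$).
   Context: For $G=(V,E)$, $N(v)$ is the neighbourhood of $v$. For a state $S:V\to\tau$ and $v,w\in V$, $S|_{v\to w}$ equals $S$ except $w$ gets type $S(v)$. The Moran process $M(G,\tau,f,M_0)$ is the Markov chain on states started at $M_0$ in which, given $M_t$, a vertex $v$ is chosen with probability $f(M_t(v))/\sum_{u\in V}f(M_t(u))$, then $w\in N(v)$ uniformly at random, and $M_{t+1}=M_t|_{v\to w}$. $\pi_j(G,\tau,f,M_0)$ is the probability that at some time every vertex has type $j$. *)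

theory Defs
  imports "HOL-Probability.Probability"
begin

definition connected_graph :: "'v set \<Rightarrow> ('v \<times> 'v) set \<Rightarrow> bool" where
  "connected_graph V E \<longleftrightarrow> finite V \<and> V \<noteq> {} \<and> E \<subseteq> V \<times> V \<and> sym E \<and> irrefl E
     \<and> (\<forall>u\<in>V. \<forall>v\<in>V. (u, v) \<in> E\<^sup>*)"

definition nbhd :: "('v \<times> 'v) set \<Rightarrow> 'v \<Rightarrow> 'v set" where
  "nbhd E v = {w. (v, w) \<in> E}"

definition select_vertex :: "'v set \<Rightarrow> ('t \<Rightarrow> rat) \<Rightarrow> ('v \<Rightarrow> 't) \<Rightarrow> 'v pmf" where
  "select_vertex V f S = embed_pmf (\<lambda>v. if v \<in> V
      then real_of_rat (f (S v)) / (\<Sum>u\<in>V. real_of_rat (f (S u))) else 0)"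

text \<open>One step of the Moran process: pick v by fitness, then a uniform neighbour w,
  and w takes the type of v.  (For an isolated vertex, which only occurs in the
  one-vertex graph, the state is left unchanged.)\<close>
definition moran_step :: "'v set \<Rightarrow> ('v \<times> 'v) set \<Rightarrow> ('t \<Rightarrow> rat) \<Rightarrow> ('v \<Rightarrow> 't) \<Rightarrow> ('v \<Rightarrow> 't) pmf" where
  "moran_step V E f S = bind_pmf (select_vertex V f S) (\<lambda>v.
      if nbhd E v = {} then return_pmf S
      else map_pmf (\<lambda>w. S(w := S v)) (pmf_of_set (nbhd E v)))"

fun moran_path :: "'v set \<Rightarrow> ('v \<times> 'v) set \<Rightarrow> ('t \<Rightarrow> rat) \<Rightarrow> ('v \<Rightarrow> 't) \<Rightarrow> nat \<Rightarrow> ('v \<Rightarrow> 't) list pmf" where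
  "moran_path V E f M0 0 = return_pmf [M0]"
| "moran_path V E f M0 (Suc n) = bind_pmf (moran_path V E f M0 n)
      (\<lambda>xs. map_pmf (\<lambda>s. xs @ [s]) (moran_step V E f (last xs)))"

text \<open>pi_j: probability that at some time every vertex has type j, i.e. the limit
  (supremum) over n of the probability that this happens at some time t \<le> n.\<close>
definition fixation_prob :: "'v set \<Rightarrow> ('v \<times> 'v) set \<Rightarrow> ('t \<Rightarrow> rat) \<Rightarrow> ('v \<Rightarrow> 't) \<Rightarrow> 't \<Rightarrow> real" where
  "fixation_prob V E f M0 j = (SUP n. measure_pmf.prob (moran_path V E f M0 n)
      {xs. \<exists>s\<in>set xs. \<forall>v\<in>V. s v = j})"

end

theory Submission
  imports Defs
begin

(* Let H B be the probability that alpha fixates in the two-type process started with alpha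
   exactly on B and beta elsewhere, and Psi A = min {H B | A <= B <= V} its largest monotone
   minorant.  H is harmonic for the two-type chain away from B = V.  For a state S with
   alpha-set A, choose B attaining Psi A and compare every reproduction event v -> w from S
   with the same event from the two-type state on B: if S v = alpha, Psi rises by at most
   the rise of H; if S v is another type but v is in B, Psi cannot rise while H cannot fall;
   if v is outside B, then f (S v) >= f beta and Psi falls by at most as much as H does.
   Weighting by fitness, the drift of Psi (alpha-set) is at most the zero drift of H, so
   Psi (alpha-set) is a supermartingale that equals 1 at fixation.  It therefore bounds the
   probability of fixation within any n steps, and Psi A <= H A. *)

section \<open>Bounded expectations under probability mass functions\<close>

lemma expectation_bind_pmf_bounded:
  fixes \<phi> :: "'b \<Rightarrow> real"
  assumes "\<And>x. \<bar>\<phi> x\<bar> \<le> B"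
  shows "measure_pmf.expectation (bind_pmf M N) \<phi> =
    measure_pmf.expectation M (\<lambda>x. measure_pmf.expectation (N x) \<phi>)"
  unfolding measure_pmf_bind
  by (rule integral_bind[where K="count_space UNIV" and B=B and B'=1])
     (auto simp: assms measure_pmf.emeasure_space_1 prob_space_imp_subprob_space
       measure_pmf_in_subprob_algebra prob_space.finite_measure measure_pmf.prob_space_axioms)

lemma expectation_mono_pmf_bounded:
  fixes \<phi> \<psi> :: "'b \<Rightarrow> real"
  assumes "\<And>x. \<bar>\<phi> x\<bar> \<le> B" "\<And>x. \<bar>\<psi> x\<bar> \<le> B" "\<And>x. x \<in> set_pmf M \<Longrightarrow> \<phi> x \<le> \<psi> x"
  shows "measure_pmf.expectation M \<phi> \<le> measure_pmf.expectation M \<psi>"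
proof (rule integral_mono_AE)
  show "integrable (measure_pmf M) \<phi>" "integrable (measure_pmf M) \<psi>"
    by (auto intro: measure_pmf.integrable_const_bound[where B=B] simp: assms)
  show "AE x in measure_pmf M. \<phi> x \<le> \<psi> x"
    using assms(3) by (simp add: AE_measure_pmf_iff)
qed

lemma tendsto_expectation_pmf_bounded:
  fixes \<phi> :: "nat \<Rightarrow> 'b \<Rightarrow> real"
  assumes "\<And>x. (\<lambda>n. \<phi> n x) \<longlonglongrightarrow> \<psi> x" "\<And>n x. \<bar>\<phi> n x\<bar> \<le> B"
  shows "(\<lambda>n. measure_pmf.expectation M (\<phi> n)) \<longlonglongrightarrow> measure_pmf.expectation M \<psi>"
  by (rule integral_dominated_convergence[where w="\<lambda>_. B"]) (auto simp: assms)

lemma measure_pmf_prob_eq_expectation: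
  "measure_pmf.prob M A = measure_pmf.expectation M (indicator A :: _ \<Rightarrow> real)"
  by simp

section \<open>Fixation within finitely many steps\<close>

lemma moran_path_nonempty: "xs \<in> set_pmf (moran_path V E f S n) \<Longrightarrow> xs \<noteq> []"
  by (induction n arbitrary: xs) auto

lemma moran_path_Suc_first_step:
  "moran_path V E f S (Suc n) =
     bind_pmf (moran_step V E f S) (\<lambda>T. map_pmf ((#) S) (moran_path V E f T n))"
proof (induction n)
  case 0
  then show ?case by (simp add: bind_return_pmf map_pmf_def bind_assoc_pmf)
next
  case (Suc n)
  have "moran_path V E f S (Suc (Suc n)) = bind_pmf (moran_step V E f S) (\<lambda>T.
      bind_pmf (moran_path V E f T n)
        (\<lambda>xs. map_pmf (\<lambda>t. (S # xs) @ [t]) (moran_step V E f (last (S # xs)))))"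
    by (simp only: moran_path.simps(2)[of V E f S "Suc n"] Suc)
       (simp add: bind_assoc_pmf bind_map_pmf del: moran_path.simps)
  also have "\<dots> = bind_pmf (moran_step V E f S) (\<lambda>T.
      bind_pmf (moran_path V E f T n)
        (\<lambda>xs. map_pmf ((#) S) (map_pmf (\<lambda>t. xs @ [t]) (moran_step V E f (last xs)))))"
    by (intro bind_pmf_cong refl) (auto dest: moran_path_nonempty simp: pmf.map_comp o_def)
  also have "\<dots> = bind_pmf (moran_step V E f S) (\<lambda>T. map_pmf ((#) S) (moran_path V E f T (Suc n)))"
    by (simp add: map_bind_pmf)
  finally show ?case .
qed

definition fixation_prob_upto ::
    "'v set \<Rightarrow> ('v \<times> 'v) set \<Rightarrow> ('t \<Rightarrow> rat) \<Rightarrow> 't \<Rightarrow> nat \<Rightarrow> ('v \<Rightarrow> 't) \<Rightarrow> real" where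
  "fixation_prob_upto V E f j n S =
     measure_pmf.prob (moran_path V E f S n) {xs. \<exists>s\<in>set xs. \<forall>v\<in>V. s v = j}"

lemma fixation_prob_upto_nonneg: "0 \<le> fixation_prob_upto V E f j n S"
  by (simp add: fixation_prob_upto_def)

lemma fixation_prob_upto_le_1: "fixation_prob_upto V E f j n S \<le> 1"
  by (simp add: fixation_prob_upto_def)

lemma fixation_prob_upto_0:
  "fixation_prob_upto V E f j 0 S = (if \<forall>v\<in>V. S v = j then 1 else 0)"
  by (simp add: fixation_prob_upto_def)

lemma fixation_prob_upto_Suc:
  "fixation_prob_upto V E f j (Suc n) S = (if \<forall>v\<in>V. S v = j then 1
     else measure_pmf.expectation (moran_step V E f S) (fixation_prob_upto V E f j n))"
proof -
  let ?fixed = "{xs. \<exists>s\<in>set xs. \<forall>v\<in>V. s v = j}"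
  have "fixation_prob_upto V E f j (Suc n) S = measure_pmf.expectation (moran_step V E f S)
      (\<lambda>T. measure_pmf.prob (moran_path V E f T n) ((#) S -` ?fixed))"
    unfolding fixation_prob_upto_def moran_path_Suc_first_step
      measure_pmf_prob_eq_expectation
    by (subst expectation_bind_pmf_bounded[where B=1]) (auto simp: indicator_def)
  moreover have "(#) S -` ?fixed = (if \<forall>v\<in>V. S v = j then UNIV else ?fixed)"
    by auto
  ultimately show ?thesis
    by (simp add: fixation_prob_upto_def[abs_def])
qed

lemma fixation_prob_upto_mono: "incseq (\<lambda>n. fixation_prob_upto V E f j n S)"
proof (rule incseq_SucI)
  let ?fixed = "{xs. \<exists>s\<in>set xs. \<forall>v\<in>V. s v = j}"
  fix n
  have "fixation_prob_upto V E f j (Suc n) S = measure_pmf.expectation (moran_path V E f S n)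
      (\<lambda>xs. measure_pmf.prob (moran_step V E f (last xs)) ((\<lambda>s. xs @ [s]) -` ?fixed))"
    unfolding fixation_prob_upto_def moran_path.simps measure_pmf_prob_eq_expectation
    by (subst expectation_bind_pmf_bounded[where B=1]) (auto simp: indicator_def)
  also have "\<dots> \<ge> measure_pmf.expectation (moran_path V E f S n) (indicator ?fixed)"
    by (rule expectation_mono_pmf_bounded[where B=1]) (auto simp: indicator_def)
  finally show "fixation_prob_upto V E f j n S \<le> fixation_prob_upto V E f j (Suc n) S"
    by (simp add: fixation_prob_upto_def)
qed

lemma LIMSEQ_fixation_prob_upto:
  "(\<lambda>n. fixation_prob_upto V E f j n S) \<longlonglongrightarrow> fixation_prob V E f S j"
  unfolding fixation_prob_def fixation_prob_upto_def[symmetric]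
  by (intro LIMSEQ_incseq_SUP fixation_prob_upto_mono bdd_aboveI2[where M=1] fixation_prob_upto_le_1)

lemma fixation_prob_nonneg: "0 \<le> fixation_prob V E f S j"
  by (rule LIMSEQ_le_const[OF LIMSEQ_fixation_prob_upto]) (simp add: fixation_prob_upto_nonneg)

lemma fixation_prob_fixed:
  assumes "\<forall>v\<in>V. S v = j"
  shows "fixation_prob V E f S j = 1"
proof -
  have "fixation_prob_upto V E f j n S = 1" for n
    using assms by (cases n) (simp_all add: fixation_prob_upto_0 fixation_prob_upto_Suc)
  then show ?thesis
    using LIMSEQ_fixation_prob_upto[of V E f j S] by (simp add: LIMSEQ_const_iff)
qed

lemma fixation_prob_first_step:
  assumes "\<not> (\<forall>v\<in>V. S v = j)"
  shows "fixation_prob V E f S j =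
    measure_pmf.expectation (moran_step V E f S) (\<lambda>T. fixation_prob V E f T j)"
proof (rule LIMSEQ_unique)
  show "(\<lambda>n. fixation_prob_upto V E f j (Suc n) S) \<longlonglongrightarrow> fixation_prob V E f S j"
    using LIMSEQ_fixation_prob_upto by (rule LIMSEQ_Suc)
  show "(\<lambda>n. fixation_prob_upto V E f j (Suc n) S) \<longlonglongrightarrow>
      measure_pmf.expectation (moran_step V E f S) (\<lambda>T. fixation_prob V E f T j)"
    unfolding fixation_prob_upto_Suc if_not_P[OF assms]
    by (rule tendsto_expectation_pmf_bounded[where B=1])
       (simp_all add: LIMSEQ_fixation_prob_upto fixation_prob_upto_nonneg fixation_prob_upto_le_1)
qed

section \<open>The expected effect of one Moran step\<close>

lemma pmf_select_vertex:
  assumes "finite V" "V \<noteq> {}" "\<forall>u\<in>V. 0 < f (S u)"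
  shows "pmf (select_vertex V f S) v =
    (if v \<in> V then real_of_rat (f (S v)) / (\<Sum>u\<in>V. real_of_rat (f (S u))) else 0)"
proof -
  let ?p = "\<lambda>v. if v \<in> V then real_of_rat (f (S v)) / (\<Sum>u\<in>V. real_of_rat (f (S u))) else 0"
  have total_pos: "0 < (\<Sum>u\<in>V. real_of_rat (f (S u)))"
    using assms by (intro sum_pos) auto
  have nonneg: "0 \<le> ?p v" for v
    using assms(3) total_pos by (auto simp: less_imp_le)
  have "(\<integral>\<^sup>+v. ennreal (?p v) \<partial>count_space UNIV) = (\<Sum>v\<in>V. ennreal (?p v))"
    by (rule nn_integral_count_space') (auto simp: assms(1))
  also have "\<dots> = ennreal (\<Sum>v\<in>V. ?p v)"
    by (intro sum_ennreal nonneg)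
  also have "(\<Sum>v\<in>V. ?p v) = 1"
    using total_pos by (simp add: sum_divide_distrib[symmetric])
  finally show ?thesis
    unfolding select_vertex_def using nonneg by (subst pmf_embed_pmf) auto
qed

lemma set_pmf_select_vertex:
  assumes "finite V" "V \<noteq> {}" "\<forall>u\<in>V. 0 < f (S u)"
  shows "set_pmf (select_vertex V f S) \<subseteq> V"
  by (auto simp: set_pmf_eq pmf_select_vertex[of V f S, OF assms])

definition mean_after_reproduction ::
    "('v \<times> 'v) set \<Rightarrow> ('v \<Rightarrow> 't) \<Rightarrow> (('v \<Rightarrow> 't) \<Rightarrow> real) \<Rightarrow> 'v \<Rightarrow> real" where
  "mean_after_reproduction E S \<phi> v = (if nbhd E v = {} then \<phi> S
     else (\<Sum>w\<in>nbhd E v. \<phi> (S(w := S v))) / card (nbhd E v))"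

lemma nbhd_subset: "E \<subseteq> V \<times> V \<Longrightarrow> nbhd E v \<subseteq> V"
  by (auto simp: nbhd_def)

lemma set_pmf_moran_step:
  assumes "finite V" "V \<noteq> {}" "E \<subseteq> V \<times> V" "\<forall>u\<in>V. 0 < f (S u)"
    and "T \<in> set_pmf (moran_step V E f S)"
  shows "T = S \<or> (\<exists>v\<in>V. \<exists>w. T = S(w := S v))"
  using assms(5) set_pmf_select_vertex[of V f S, OF assms(1,2,4)]
    finite_subset[OF nbhd_subset[OF assms(3)] assms(1)]
  by (auto simp: moran_step_def split: if_splits)

lemma expectation_moran_step:
  assumes "finite V" "V \<noteq> {}" "E \<subseteq> V \<times> V" "\<forall>u\<in>V. 0 < f (S u)"
  shows "measure_pmf.expectation (moran_step V E f S) \<phi> =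
    (\<Sum>v\<in>V. real_of_rat (f (S v)) * mean_after_reproduction E S \<phi> v)
      / (\<Sum>u\<in>V. real_of_rat (f (S u)))"
proof -
  have finite_nbhd: "finite (nbhd E v)" for v
    using finite_subset[OF nbhd_subset[OF assms(3)] assms(1)] .
  have "measure_pmf.expectation (moran_step V E f S) \<phi> =
      (\<Sum>v\<in>V. pmf (select_vertex V f S) v * mean_after_reproduction E S \<phi> v)"
    unfolding moran_step_def
    by (subst pmf_expectation_bind[where A=V])
       (auto simp: assms(1) finite_nbhd set_pmf_select_vertex[of V f S, OF assms(1,2,4)]
         mean_after_reproduction_def integral_pmf_of_set intro!: sum.cong)
  then show ?thesis
    by (simp add: pmf_select_vertex[of V f S, OF assms(1,2,4)] sum_divide_distrib)
qed

lemma moran_step_drift: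
  assumes "finite V" "V \<noteq> {}" "E \<subseteq> V \<times> V" "\<forall>u\<in>V. 0 < f (S u)"
  shows "(\<Sum>v\<in>V. real_of_rat (f (S v)) * (mean_after_reproduction E S \<phi> v - \<phi> S)) =
    (\<Sum>u\<in>V. real_of_rat (f (S u))) * (measure_pmf.expectation (moran_step V E f S) \<phi> - \<phi> S)"
proof -
  have "0 < (\<Sum>u\<in>V. real_of_rat (f (S u)))"
    using assms by (intro sum_pos) auto
  moreover have "(\<Sum>v\<in>V. real_of_rat (f (S v)) * (mean_after_reproduction E S \<phi> v - \<phi> S)) =
      (\<Sum>v\<in>V. real_of_rat (f (S v)) * mean_after_reproduction E S \<phi> v)
        - (\<Sum>u\<in>V. real_of_rat (f (S u))) * \<phi> S"
    by (simp add: right_diff_distrib sum_subtractf sum_distrib_right)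
  ultimately show ?thesis
    by (simp add: expectation_moran_step[of V E f S, OF assms] right_diff_distrib)
qed

lemma mean_after_reproduction_diff:
  assumes "finite (nbhd E v)" "nbhd E v \<noteq> {}"
  shows "r * (mean_after_reproduction E S \<phi> v - a) =
    (\<Sum>w\<in>nbhd E v. r * (\<phi> (S(w := S v)) - a)) / card (nbhd E v)"
proof -
  have "0 < card (nbhd E v)"
    using assms by (simp add: card_gt_0_iff)
  then show ?thesis
    using assms(2) unfolding mean_after_reproduction_def
    by (simp add: sum_distrib_left right_diff_distrib sum_subtractf field_simps)
qed

section \<open>Comparison with the two-type process\<close>

locale two_type_comparison =
  fixes V :: "'v set" and E :: "('v \<times> 'v) set" and \<tau> :: "'t set"
    and f :: "'t \<Rightarrow> rat" and \<alpha> \<beta> :: 't and c :: "'v \<Rightarrow> 't"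
  assumes finite_V: "finite V" and V_nonempty: "V \<noteq> {}" and E_subset: "E \<subseteq> V \<times> V"
    and fitness_pos: "\<forall>j\<in>\<tau>. 0 < f j"
    and alpha_type: "\<alpha> \<in> \<tau>" and beta_type: "\<beta> \<in> \<tau>" and beta_ne_alpha: "\<beta> \<noteq> \<alpha>"
    and beta_min_fitness: "\<forall>j\<in>\<tau> - {\<alpha>}. f \<beta> \<le> f j"
begin

abbreviation fitness :: "('v \<Rightarrow> 't) \<Rightarrow> 'v \<Rightarrow> real" where
  "fitness S v \<equiv> real_of_rat (f (S v))"

abbreviation step_mean :: "('v \<Rightarrow> 't) \<Rightarrow> (('v \<Rightarrow> 't) \<Rightarrow> real) \<Rightarrow> real" where
  "step_mean S \<phi> \<equiv> measure_pmf.expectation (moran_step V E f S) \<phi>"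

definition valid :: "('v \<Rightarrow> 't) \<Rightarrow> bool" where
  "valid S \<longleftrightarrow> (\<forall>v\<in>V. S v \<in> \<tau>)"

definition alpha_set :: "('v \<Rightarrow> 't) \<Rightarrow> 'v set" where
  "alpha_set S = {v\<in>V. S v = \<alpha>}"

(* Types outside V never change and do not affect fixation; c supplies them. *)
definition two_type :: "'v set \<Rightarrow> 'v \<Rightarrow> 't" where
  "two_type B v = (if v \<in> V then if v \<in> B then \<alpha> else \<beta> else c v)"

definition two_type_fixation :: "'v set \<Rightarrow> real" where
  "two_type_fixation B = fixation_prob V E f (two_type B) \<alpha>"

definition fixation_envelope :: "'v set \<Rightarrow> real" where
  "fixation_envelope A = Min (two_type_fixation ` {B. A \<subseteq> B \<and> B \<subseteq> V})"

lemma valid_fitness_pos: "valid S \<Longrightarrow> \<forall>u\<in>V. 0 < f (S u)"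
  using fitness_pos by (auto simp: valid_def)

lemma valid_moran_step:
  assumes "valid S" "T \<in> set_pmf (moran_step V E f S)"
  shows "valid T"
  using set_pmf_moran_step[of V E f S, OF finite_V V_nonempty E_subset valid_fitness_pos] assms
  by (fastforce simp: valid_def)

lemma valid_two_type: "valid (two_type B)"
  using alpha_type beta_type by (simp add: valid_def two_type_def)

lemma alpha_set_subset: "alpha_set S \<subseteq> V"
  by (auto simp: alpha_set_def)

lemma alpha_set_eq_V_iff: "alpha_set S = V \<longleftrightarrow> (\<forall>v\<in>V. S v = \<alpha>)"
  by (auto simp: alpha_set_def)

lemma alpha_set_upd:
  "v \<in> V \<Longrightarrow> w \<in> V \<Longrightarrow>
    alpha_set (S(w := S v)) = (if S v = \<alpha> then insert w (alpha_set S) else alpha_set S - {w})"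
  by (auto simp: alpha_set_def)

lemma two_type_upd:
  "v \<in> V \<Longrightarrow> w \<in> V \<Longrightarrow>
    (two_type B)(w := two_type B v) = two_type (if v \<in> B then insert w B else B - {w})"
  by (auto simp: two_type_def)

lemma two_type_fixed_iff: "B \<subseteq> V \<Longrightarrow> (\<forall>v\<in>V. two_type B v = \<alpha>) \<longleftrightarrow> B = V"
  using beta_ne_alpha by (auto simp: two_type_def)

lemma two_type_fixation_V: "two_type_fixation V = 1"
  unfolding two_type_fixation_def by (rule fixation_prob_fixed) (simp add: two_type_def)

lemma two_type_drift_eq_0:
  assumes "B \<subseteq> V" "B \<noteq> V"
  shows "(\<Sum>v\<in>V. fitness (two_type B) v * (mean_after_reproduction E (two_type B)
      (\<lambda>T. fixation_prob V E f T \<alpha>) v - two_type_fixation B)) = 0"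
proof -
  have "two_type_fixation B = step_mean (two_type B) (\<lambda>T. fixation_prob V E f T \<alpha>)"
    unfolding two_type_fixation_def using assms two_type_fixed_iff
    by (intro fixation_prob_first_step) blast
  then show ?thesis
    using moran_step_drift[of V E f "two_type B", OF finite_V V_nonempty E_subset
        valid_fitness_pos[OF valid_two_type], of "\<lambda>T. fixation_prob V E f T \<alpha>"]
    by (simp add: two_type_fixation_def)
qed

lemma finite_supersets: "finite {B. A \<subseteq> B \<and> B \<subseteq> V}"
  using finite_V by (rule rev_finite_subset[OF finite_Pow_iff[THEN iffD2]]) auto

lemma fixation_envelope_le: "A \<subseteq> B \<Longrightarrow> B \<subseteq> V \<Longrightarrow> fixation_envelope A \<le> two_type_fixation B"
  unfolding fixation_envelope_def using finite_supersets by (intro Min_le) auto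

lemma fixation_envelope_attained:
  assumes "A \<subseteq> V"
  obtains B where "A \<subseteq> B" "B \<subseteq> V" "fixation_envelope A = two_type_fixation B"
proof -
  have "fixation_envelope A \<in> two_type_fixation ` {B. A \<subseteq> B \<and> B \<subseteq> V}"
    unfolding fixation_envelope_def using finite_supersets assms by (intro Min_in) auto
  then show ?thesis using that by blast
qed

lemma fixation_envelope_mono: "A \<subseteq> A' \<Longrightarrow> A' \<subseteq> V \<Longrightarrow> fixation_envelope A \<le> fixation_envelope A'"
  by (metis fixation_envelope_attained fixation_envelope_le order_trans)

lemma fixation_envelope_nonneg: "A \<subseteq> V \<Longrightarrow> 0 \<le> fixation_envelope A"
  by (metis fixation_envelope_attained fixation_prob_nonneg two_type_fixation_def)

lemma fixation_envelope_V: "fixation_envelope V = 1"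
proof -
  obtain B where "V \<subseteq> B" "B \<subseteq> V" "fixation_envelope V = two_type_fixation B"
    using fixation_envelope_attained by blast
  then show ?thesis
    using two_type_fixation_V by simp
qed

lemma fixation_envelope_le_1: "A \<subseteq> V \<Longrightarrow> fixation_envelope A \<le> 1"
  using fixation_envelope_le[of A V] two_type_fixation_V by simp

lemma reproduction_in_B_drift_le:
  assumes "valid S" "alpha_set S \<subseteq> B" "B \<subseteq> V"
    and min: "fixation_envelope (alpha_set S) = two_type_fixation B"
    and "v \<in> B" "w \<in> V"
  shows "fitness S v * (fixation_envelope (alpha_set (S(w := S v))) - fixation_envelope (alpha_set S))
    \<le> real_of_rat (f \<alpha>) * (two_type_fixation (insert w B) - two_type_fixation B)"
proof -
  let ?A = "alpha_set S"
  have "v \<in> V" using assms(3,5) by blast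
  have fitness_nonneg: "0 \<le> fitness S v" "0 \<le> real_of_rat (f \<alpha>)"
    using valid_fitness_pos[OF assms(1)] \<open>v \<in> V\<close> fitness_pos alpha_type by (auto intro: less_imp_le)
  show ?thesis
  proof (cases "S v = \<alpha>")
    case True
    then have "alpha_set (S(w := S v)) = insert w ?A"
      using alpha_set_upd[OF \<open>v \<in> V\<close> assms(6), of S] by simp
    moreover have "fixation_envelope (insert w ?A) \<le> two_type_fixation (insert w B)"
      using assms by (intro fixation_envelope_le) auto
    ultimately show ?thesis
      using fitness_nonneg min unfolding True by (intro mult_left_mono) auto
  next
    case False
    then have "alpha_set (S(w := S v)) = ?A - {w}"
      using alpha_set_upd[OF \<open>v \<in> V\<close> assms(6), of S] by simp
    moreover have "fixation_envelope (?A - {w}) \<le> fixation_envelope ?A"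
      by (intro fixation_envelope_mono alpha_set_subset) auto
    moreover have "two_type_fixation B \<le> two_type_fixation (insert w B)"
      using min fixation_envelope_le[of ?A "insert w B"] assms(2,3,6) by auto
    ultimately show ?thesis
      using fitness_nonneg by (simp add: mult_nonneg_nonpos order_trans[OF _ mult_nonneg_nonneg])
  qed
qed

lemma reproduction_outside_B_drift_le:
  assumes "valid S" "alpha_set S \<subseteq> B" "B \<subseteq> V"
    and min: "fixation_envelope (alpha_set S) = two_type_fixation B"
    and "v \<in> V - B" "w \<in> V"
  shows "fitness S v * (fixation_envelope (alpha_set (S(w := S v))) - fixation_envelope (alpha_set S))
    \<le> real_of_rat (f \<beta>) * (two_type_fixation (B - {w}) - two_type_fixation B)"
proof -
  let ?A = "alpha_set S"
  have "S v \<in> \<tau> - {\<alpha>}"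
    using assms(1,2,5) by (auto simp: valid_def alpha_set_def)
  then have "real_of_rat (f \<beta>) \<le> fitness S v" and "alpha_set (S(w := S v)) = ?A - {w}"
    using beta_min_fitness alpha_set_upd[of v w S] assms(5,6) by (auto simp: of_rat_less_eq)
  moreover have "0 \<le> real_of_rat (f \<beta>)"
    using fitness_pos beta_type by (auto intro: less_imp_le)
  moreover have "fixation_envelope (?A - {w}) \<le> fixation_envelope ?A"
    by (intro fixation_envelope_mono alpha_set_subset) auto
  moreover have "fixation_envelope (?A - {w}) \<le> two_type_fixation (B - {w})"
    using assms(2,3) by (intro fixation_envelope_le) auto
  ultimately show ?thesis
    using min by (smt (verit) mult_left_mono mult_right_mono_neg)
qed

lemma reproduction_drift_le:
  assumes "valid S" "alpha_set S \<subseteq> B" "B \<subseteq> V"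
    and "fixation_envelope (alpha_set S) = two_type_fixation B"
    and "v \<in> V" "w \<in> V"
  shows "fitness S v * (fixation_envelope (alpha_set (S(w := S v))) - fixation_envelope (alpha_set S))
    \<le> fitness (two_type B) v
       * (fixation_prob V E f ((two_type B)(w := two_type B v)) \<alpha> - two_type_fixation B)"
proof (cases "v \<in> B")
  case True
  then show ?thesis
    using reproduction_in_B_drift_le[OF assms(1-4) True assms(6)] assms(5,6)
    by (simp add: two_type_upd two_type_fixation_def) (simp add: two_type_def)
next
  case False
  then show ?thesis
    using reproduction_outside_B_drift_le[OF assms(1-4) _ assms(6)] assms(5,6)
    by (simp add: two_type_upd two_type_fixation_def) (simp add: two_type_def)
qed

lemma vertex_drift_le:
  assumes "valid S" "alpha_set S \<subseteq> B" "B \<subseteq> V"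
    and "fixation_envelope (alpha_set S) = two_type_fixation B" and "v \<in> V"
  shows "fitness S v * (mean_after_reproduction E S (\<lambda>T. fixation_envelope (alpha_set T)) v
      - fixation_envelope (alpha_set S))
    \<le> fitness (two_type B) v * (mean_after_reproduction E (two_type B)
      (\<lambda>T. fixation_prob V E f T \<alpha>) v - two_type_fixation B)"
proof (cases "nbhd E v = {}")
  case True
  then show ?thesis
    using assms(4) by (simp add: mean_after_reproduction_def two_type_fixation_def)
next
  case False
  have "finite (nbhd E v)"
    using finite_subset[OF nbhd_subset[OF E_subset] finite_V] .
  then show ?thesis
    unfolding mean_after_reproduction_diff[OF \<open>finite (nbhd E v)\<close> False]
    using reproduction_drift_le[OF assms] nbhd_subset[OF E_subset]
    by (intro divide_right_mono sum_mono) auto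
qed

lemma fixation_envelope_supermartingale:
  assumes "valid S" "alpha_set S \<noteq> V"
  shows "step_mean S (\<lambda>T. fixation_envelope (alpha_set T)) \<le> fixation_envelope (alpha_set S)"
proof -
  obtain B where B: "alpha_set S \<subseteq> B" "B \<subseteq> V"
      and min: "fixation_envelope (alpha_set S) = two_type_fixation B"
    using fixation_envelope_attained[OF alpha_set_subset] .
  show ?thesis
  proof (cases "B = V")
    case True
    have "step_mean S (\<lambda>T. fixation_envelope (alpha_set T)) \<le> step_mean S (\<lambda>T. 1)"
      by (rule expectation_mono_pmf_bounded[where B=1])
         (simp_all add: fixation_envelope_nonneg fixation_envelope_le_1 alpha_set_subset)
    then show ?thesis
      using True min two_type_fixation_V by simp
  next
    case False
    have "(\<Sum>u\<in>V. fitness S u)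
        * (step_mean S (\<lambda>T. fixation_envelope (alpha_set T)) - fixation_envelope (alpha_set S))
      = (\<Sum>v\<in>V. fitness S v * (mean_after_reproduction E S (\<lambda>T. fixation_envelope (alpha_set T)) v
          - fixation_envelope (alpha_set S)))"
      by (rule moran_step_drift[of V E f S, OF finite_V V_nonempty E_subset valid_fitness_pos[OF assms(1)],
          symmetric])
    also have "\<dots> \<le> (\<Sum>v\<in>V. fitness (two_type B) v * (mean_after_reproduction E (two_type B)
        (\<lambda>T. fixation_prob V E f T \<alpha>) v - two_type_fixation B))"
      using vertex_drift_le[OF assms(1) B min] by (intro sum_mono)
    also have "\<dots> = 0"
      using two_type_drift_eq_0[OF B(2) False] .
    moreover have "0 < (\<Sum>u\<in>V. fitness S u)"
      using valid_fitness_pos[OF assms(1)] finite_V V_nonempty by (intro sum_pos) auto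
    ultimately show ?thesis
      by (simp add: mult_le_0_iff)
  qed
qed

lemma fixation_prob_upto_le_envelope:
  "valid S \<Longrightarrow> fixation_prob_upto V E f \<alpha> n S \<le> fixation_envelope (alpha_set S)"
proof (induction n arbitrary: S)
  case 0
  show ?case
  proof (cases "alpha_set S = V")
    case True
    then show ?thesis by (simp add: fixation_envelope_V fixation_prob_upto_le_1)
  next
    case False
    then show ?thesis
      by (auto simp: fixation_prob_upto_0 alpha_set_eq_V_iff fixation_envelope_nonneg alpha_set_subset)
  qed
next
  case (Suc n)
  show ?case
  proof (cases "alpha_set S = V")
    case True
    then show ?thesis by (simp add: fixation_envelope_V fixation_prob_upto_le_1)
  next
    case False
    then have "\<not> (\<forall>v\<in>V. S v = \<alpha>)"
      by (simp add: alpha_set_eq_V_iff)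
    then have "fixation_prob_upto V E f \<alpha> (Suc n) S = step_mean S (fixation_prob_upto V E f \<alpha> n)"
      by (simp only: fixation_prob_upto_Suc if_False)
    also have "\<dots> \<le> step_mean S (\<lambda>T. fixation_envelope (alpha_set T))"
      using Suc valid_moran_step
      by (intro expectation_mono_pmf_bounded[where B=1])
         (simp_all add: fixation_prob_upto_nonneg fixation_prob_upto_le_1
           fixation_envelope_nonneg fixation_envelope_le_1 alpha_set_subset)
    also have "\<dots> \<le> fixation_envelope (alpha_set S)"
      using Suc.prems False by (rule fixation_envelope_supermartingale)
    finally show ?thesis .
  qed
qed

lemma fixation_prob_le_two_type:
  assumes "valid S"
  shows "fixation_prob V E f S \<alpha> \<le> two_type_fixation (alpha_set S)"
proof -
  have "fixation_prob V E f S \<alpha> \<le> fixation_envelope (alpha_set S)"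
    unfolding fixation_prob_def fixation_prob_upto_def[symmetric]
    using fixation_prob_upto_le_envelope[OF assms] by (rule cSUP_least[rotated]) simp
  also have "\<dots> \<le> two_type_fixation (alpha_set S)"
    by (intro fixation_envelope_le alpha_set_subset order_refl)
  finally show ?thesis .
qed

end

theorem corollary21:
  fixes V :: "'v set" and E :: "('v \<times> 'v) set" and \<tau> :: "'t set"
    and f :: "'t \<Rightarrow> rat" and \<alpha> \<beta> :: 't and M0 :: "'v \<Rightarrow> 't"
  assumes "connected_graph V E"
    and "\<forall>j\<in>\<tau>. f j \<ge> 1"
    and "\<alpha> \<in> \<tau>"
    and "\<beta> \<in> \<tau> - {\<alpha>}" and "\<forall>j\<in>\<tau> - {\<alpha>}. f \<beta> \<le> f j"
    and "\<forall>v\<in>V. M0 v \<in> \<tau>"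
  shows "fixation_prob V E f M0 \<alpha>
    \<le> fixation_prob V E f (\<lambda>v. if M0 v = \<alpha> then \<alpha> else \<beta>) \<alpha>"
proof -
  interpret two_type_comparison V E \<tau> f \<alpha> \<beta> "\<lambda>v. if M0 v = \<alpha> then \<alpha> else \<beta>"
    using assms(1-5) by unfold_locales (auto simp: connected_graph_def intro: less_le_trans[OF zero_less_one])
  have "two_type (alpha_set M0) = (\<lambda>v. if M0 v = \<alpha> then \<alpha> else \<beta>)"
    by (auto simp: two_type_def alpha_set_def)
  then show ?thesis
    using fixation_prob_le_two_type[of M0] assms(6) by (simp add: valid_def two_type_fixation_def)
qed

end
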